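(* Let $c$ be a correct client following the client protocol described in the context, let $w$ be a \textsc{put} operation and $r$ a \textsc{get} operation issued by $c$, with $w$ issued before $r$. Then $\mathrm{ts}(r) \ge \mathrm{ts}(w)$.
   Context: Client model. A client $c$ has a physical clock whose reading $\mathsf{clock}_c$ is a positive real number that is strictly increasing in real time. The client keeps two variables, a dependency time $\mathsf{dt}_c$ and a common global stable time $\mathsf{cgst}_c$, both initially $0$; they are modified only as described below. A correct client issues its operations one at a time: an operation is issued only after the previous one has returned. Servers are grouped into partitions of $3f+1$ replicas each, and a quorum is a set of $2f+1$ replicas of one partition. \textsc{get}$(k)$: the client sets $ts \gets \max\{\mathsf{dt}_c, \mathsf{cgst}_c\}$ and sends a request carrying $ts$ to the replicas of the partition holding $k$. It then waits for replies from a quorum $Q$, each reply from replica $i\in Q$ carrying a value $v_i$ and a number $cgst_i$, sets $\mathsf{cgst}_c \gets \max\{\mathsf{cgst}_c, \min_{i\in Q} cgst_i\}$, and returns a value. \textsc{put}$(k,v)$: the client waits until $\mathsf{clock}_c > \mathsf{cgst}_c$, then sends a request carrying $(k, v, cl, c)$, where $cl$ is the current reading of $\mathsf{clock}_c$, to the replicas of the partition holding $k$. It then waits for replies from a quorum $Q$, each reply from $i\in Q$ carrying a number $cgst_i$, sets $\mathsf{cgst}_c \gets \max\{\mathsf{cgst}_c, \min_{i\in Q} cgst_i\}$, then sets $\mathsf{dt}_c$ to the current reading of $\mathsf{clock}_c$, and returns. Timestamps: for a \textsc{get} operation $o$, $\mathrm{ts}(o)$ is the value $ts=\max\{\mathsf{dt}_c,\mathsf{cgst}_c\}$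 computed when $o$ is issued; for a \textsc{put} operation $o$, $\mathrm{ts}(o)$ is the clock value $cl$ sent in its request. *)

theory Defs
  imports Main "HOL.Real"
begin

text \<open>An operation executed by a client, together with the real times at which
  it was issued, its request was sent, and it returned.
  GetOp k rs ti ts tr : a get on key k; rs are the cgst values carried by the
    replies of the quorum Q.
  PutOp k v rs ti ts tr : a put of (k,v); rs as above; the request carrying
    cl = clock ts is sent at real time ts.\<close>

datatype ('k, 'v) opn =
    GetOp 'k "real list" real real real
  | PutOp 'k 'v "real list" real real real

fun replies :: "('k,'v) opn \<Rightarrow> real list" where
  "replies (GetOp _ rs _ _ _) = rs"
| "replies (PutOp _ _ rs _ _ _) = rs"

fun t_issue :: "('k,'v) opn \<Rightarrow> real" where
  "t_issue (GetOp _ _ a _ _) = a"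
| "t_issue (PutOp _ _ _ a _ _) = a"

fun t_send :: "('k,'v) opn \<Rightarrow> real" where
  "t_send (GetOp _ _ _ s _) = s"
| "t_send (PutOp _ _ _ _ s _) = s"

fun t_return :: "('k,'v) opn \<Rightarrow> real" where
  "t_return (GetOp _ _ _ _ e) = e"
| "t_return (PutOp _ _ _ _ _ e) = e"

fun is_put :: "('k,'v) opn \<Rightarrow> bool" where
  "is_put (GetOp _ _ _ _ _) = False"
| "is_put (PutOp _ _ _ _ _ _) = True"

fun is_get :: "('k,'v) opn \<Rightarrow> bool" where
  "is_get (GetOp _ _ _ _ _) = True"
| "is_get (PutOp _ _ _ _ _ _) = False"

text \<open>Client state (dt, cgst) and its update when an operation completes.\<close>
fun client_step :: "(real \<Rightarrow> real) \<Rightarrow> real \<times> real \<Rightarrow> ('k,'v) opn \<Rightarrow> real \<times> real" where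
  "client_step clock (dt, cg) (GetOp _ rs _ _ _) = (dt, max cg (Min (set rs)))"
| "client_step clock (dt, cg) (PutOp _ _ rs _ _ e) = (clock e, max cg (Min (set rs)))"

definition state_before :: "(real \<Rightarrow> real) \<Rightarrow> ('k,'v) opn list \<Rightarrow> nat \<Rightarrow> real \<times> real" where
  "state_before clock ops i = foldl (client_step clock) (0, 0) (take i ops)"

definition op_ts :: "(real \<Rightarrow> real) \<Rightarrow> ('k,'v) opn list \<Rightarrow> nat \<Rightarrow> real" where
  "op_ts clock ops i =
     (if is_put (ops ! i) then clock (t_send (ops ! i))
      else max (fst (state_before clock ops i)) (snd (state_before clock ops i)))"

definition correct_run :: "nat \<Rightarrow> (real \<Rightarrow> real) \<Rightarrow> ('k,'v) opn list \<Rightarrow> bool" where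
  "correct_run f clock ops \<longleftrightarrow>
     strict_mono clock \<and> (\<forall>t. clock t > 0) \<and>
     (\<forall>i < length ops.
        length (replies (ops ! i)) = 2 * f + 1 \<and>
        t_issue (ops ! i) \<le> t_send (ops ! i) \<and> t_send (ops ! i) \<le> t_return (ops ! i) \<and>
        (is_put (ops ! i) \<longrightarrow> clock (t_send (ops ! i)) > snd (state_before clock ops i))) \<and>
     (\<forall>i. Suc i < length ops \<longrightarrow> t_return (ops ! i) \<le> t_issue (ops ! Suc i))"

end

theory Submission
  imports Defs
begin

text \<open>A put sets \<open>dt\<close> to the clock reading at its return, which is at least the
  clock value it sent. Later operations never lower \<open>dt\<close>: gets leave it alone, and
  later puts return later, so by monotonicity of the clock they only raise it. A get
  takes \<open>max dt cgst\<close> as its timestamp, hence dominates every earlier put.\<close>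

lemma state_before_Suc:
  assumes "i < length ops"
  shows "state_before clock ops (Suc i) = client_step clock (state_before clock ops i) (ops ! i)"
  using assms by (simp add: state_before_def take_Suc_conv_app_nth)

lemma correct_run_mono_clock:
  assumes "correct_run f clock ops" "s \<le> t"
  shows "clock s \<le> clock t"
  using assms by (simp add: correct_run_def strict_mono_less_eq)

lemma correct_run_send_le_return:
  assumes "correct_run f clock ops" "i < length ops"
  shows "t_send (ops ! i) \<le> t_return (ops ! i)"
  using assms unfolding correct_run_def by blast

lemma correct_run_return_le_next_return:
  assumes "correct_run f clock ops" "Suc i < length ops"
  shows "t_return (ops ! i) \<le> t_return (ops ! Suc i)"
proof -
  have "t_return (ops ! i) \<le> t_issue (ops ! Suc i)"
    using assms unfolding correct_run_def by blast
  moreover have "t_issue (ops ! Suc i) \<le> t_send (ops ! Suc i)"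
    using assms unfolding correct_run_def by blast
  ultimately show ?thesis
    using correct_run_send_le_return[OF assms] by linarith
qed

lemma correct_run_return_mono:
  assumes "correct_run f clock ops" "i \<le> j" "j < length ops"
  shows "t_return (ops ! i) \<le> t_return (ops ! j)"
  using assms(2,3)
proof (induction j rule: dec_induct)
  case base
  show ?case by simp
next
  case (step j)
  then show ?case
    using correct_run_return_le_next_return[OF assms(1), of j] by linarith
qed

lemma fst_client_step_put:
  "is_put op \<Longrightarrow> fst (client_step clock st op) = clock (t_return op)"
  by (cases st; cases op) simp_all

lemma fst_client_step_get:
  "is_get op \<Longrightarrow> fst (client_step clock st op) = fst st"
  by (cases st; cases op) simp_all

lemma clock_return_le_dt_after_put:
  assumes run: "correct_run f clock ops" and put: "is_put (ops ! w)"
    and "Suc w \<le> i" "i \<le> length ops"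
  shows "clock (t_return (ops ! w)) \<le> fst (state_before clock ops i)"
  using assms(3,4)
proof (induction i rule: dec_induct)
  case base
  then show ?case
    using put by (simp add: state_before_Suc fst_client_step_put)
next
  case (step i)
  then have i: "i < length ops" by simp
  show ?case
  proof (cases "is_put (ops ! i)")
    case True
    have "t_return (ops ! w) \<le> t_return (ops ! i)"
      using correct_run_return_mono[OF run _ i] step.hyps by simp
    then show ?thesis
      using True i by (simp add: state_before_Suc fst_client_step_put correct_run_mono_clock[OF run])
  next
    case False
    then have "is_get (ops ! i)" by (cases "ops ! i") simp_all
    then show ?thesis
      using step.IH i by (simp add: state_before_Suc fst_client_step_get)
  qed
qed

lemma op_ts_put: "is_put (ops ! i) \<Longrightarrow> op_ts clock ops i = clock (t_send (ops ! i))"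
  by (simp add: op_ts_def)

lemma dt_le_op_ts_get:
  "is_get (ops ! i) \<Longrightarrow> fst (state_before clock ops i) \<le> op_ts clock ops i"
  by (cases "ops ! i") (simp_all add: op_ts_def)

theorem lemma5:
  fixes f :: nat and clock :: "real \<Rightarrow> real" and ops :: "('k, 'v) opn list"
    and w r :: nat
  assumes "correct_run f clock ops"
    and "w < r" and "r < length ops"
    and "is_put (ops ! w)" and "is_get (ops ! r)"
  shows "op_ts clock ops r \<ge> op_ts clock ops w"
proof -
  have "op_ts clock ops w = clock (t_send (ops ! w))"
    using assms(4) by (rule op_ts_put)
  also have "\<dots> \<le> clock (t_return (ops ! w))"
    using assms(1-3) by (simp add: correct_run_mono_clock correct_run_send_le_return)
  also have "\<dots> \<le> fst (state_before clock ops r)"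
    using clock_return_le_dt_after_put[OF assms(1,4), of r] assms(2,3) by simp
  also have "\<dots> \<le> op_ts clock ops r"
    using assms(5) by (rule dt_le_op_ts_get)
  finally show ?thesis .
qed

end
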